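(* Let $H=(V,E)$ be a $k$-uniform hypergraph such that every strongly connected component of $H$ contains a copy of $K_{k+1}^k$ (i.e. a set of $k+1$ vertices all of whose $k$-subsets are hyperedges). Then $\operatorname{rank}\mathcal A_d(H)=|V|$ for all $d\geq k$.
   Context: A $k$-uniform hypergraph $H=(V,E)$ has finite vertex set $V$ and hyperedges $E$, $k$-subsets of $V$. $H$ is strongly connected if for any two distinct $\Delta,\Delta'\in E$ there are hyperedges $\Delta=\Delta_1,\Delta_2,\dots,\Delta_m=\Delta'$ with $|\Delta_i\cap\Delta_{i+1}|=k-1$ for all $i$; strongly connected components are the maximal strongly connected sub-hypergraphs (their hyperedge sets partition $E$). For $p:V\to\mathbb R^d$ with $p(\Delta)$ in general position for every $\Delta\in E$, let $p_\Delta$ be the orthogonal projection of the origin onto the affine span of $p(\Delta)$, written uniquely as $p_\Delta=\sum_{x\in\Delta}\alpha_x p(x)$ with $\sum_{x\in\Delta}\alpha_x=1$; $A(H,p)$ is the $|E|\times|V|$ matrix with entry $\alpha_x$ in row $\Delta$, column $x$ if $x\in\Delta$ and $0$ otherwise. $\mathcal A_d(H)$ is the row matroid of $A(H,p)$ for generic $p:V\to\mathbb R^d$ (coordinates algebraically independent over $\mathbb Q$). *)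

theory Defs
  imports Complex_Main
begin

definition k_uniform :: "nat \<Rightarrow> 'a set \<Rightarrow> 'a set set \<Rightarrow> bool" where
  "k_uniform k V E \<longleftrightarrow> finite V \<and> (\<forall>\<Delta>\<in>E. \<Delta> \<subseteq> V \<and> card \<Delta> = k)"

definition hyp_adj :: "nat \<Rightarrow> 'a set set \<Rightarrow> 'a set \<Rightarrow> 'a set \<Rightarrow> bool" where
  "hyp_adj k E D D' \<longleftrightarrow> D \<in> E \<and> D' \<in> E \<and> card (D \<inter> D') = k - 1"

definition strongly_conn_rel :: "nat \<Rightarrow> 'a set set \<Rightarrow> 'a set \<Rightarrow> 'a set \<Rightarrow> bool" where
  "strongly_conn_rel k E = (hyp_adj k E)\<^sup>*\<^sup>*"

definition strong_components :: "nat \<Rightarrow> 'a set set \<Rightarrow> 'a set set set" where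
  "strong_components k E = {{D'. D' \<in> E \<and> strongly_conn_rel k E D D'} | D. D \<in> E}"

definition contains_simplex :: "nat \<Rightarrow> 'a set \<Rightarrow> 'a set set \<Rightarrow> bool" where
  "contains_simplex k V C \<longleftrightarrow>
     (\<exists>S. S \<subseteq> V \<and> finite S \<and> card S = k + 1 \<and> (\<forall>T. T \<subseteq> S \<and> card T = k \<longrightarrow> T \<in> C))"

text \<open>A polynomial with rational coefficients is a finite rational combination of
  monomials; a monomial is an exponent vector with finite support inside I.\<close>
definition alg_indep_over_Q :: "'i set \<Rightarrow> ('i \<Rightarrow> real) \<Rightarrow> bool" where
  "alg_indep_over_Q I x \<longleftrightarrow>
     (\<forall>(M :: ('i \<Rightarrow> nat) set) (c :: ('i \<Rightarrow> nat) \<Rightarrow> rat).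
        finite M \<and> (\<forall>m\<in>M. finite {i. m i \<noteq> 0} \<and> {i. m i \<noteq> 0} \<subseteq> I) \<and>
        (\<Sum>m\<in>M. of_rat (c m) * (\<Prod>i\<in>{i. m i \<noteq> 0}. x i ^ m i)) = 0
        \<longrightarrow> (\<forall>m\<in>M. c m = 0))"

text \<open>Configurations p : V -> R^d, points represented as nat => real, only
  coordinates i < d are used. Generic: all coordinates p v i (v in V, i < d)
  algebraically independent over Q.\<close>
definition generic_config :: "nat \<Rightarrow> 'a set \<Rightarrow> ('a \<Rightarrow> nat \<Rightarrow> real) \<Rightarrow> bool" where
  "generic_config d V p \<longleftrightarrow> alg_indep_over_Q (V \<times> {..<d}) (\<lambda>(v, i). p v i)"

text \<open>Affine coefficients of the orthogonal projection of the origin onto the affine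
  span of p(D): coefficients supported on D summing to 1, whose point is orthogonal
  to all differences p x - p y (x, y in D).\<close>
definition proj_coeffs :: "nat \<Rightarrow> ('a \<Rightarrow> nat \<Rightarrow> real) \<Rightarrow> 'a set \<Rightarrow> 'a \<Rightarrow> real" where
  "proj_coeffs d p D = (THE \<alpha>. (\<forall>x. x \<notin> D \<longrightarrow> \<alpha> x = 0) \<and> (\<Sum>x\<in>D. \<alpha> x) = 1 \<and>
      (\<forall>x\<in>D. \<forall>y\<in>D. (\<Sum>i<d. (\<Sum>z\<in>D. \<alpha> z * p z i) * (p x i - p y i)) = 0))"

definition A_matrix :: "nat \<Rightarrow> ('a \<Rightarrow> nat \<Rightarrow> real) \<Rightarrow> 'a set \<Rightarrow> 'a \<Rightarrow> real" where
  "A_matrix d p D x = (if x \<in> D then proj_coeffs d p D x else 0)"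

definition rows_lin_indep :: "'a set \<Rightarrow> ('r \<Rightarrow> 'a \<Rightarrow> real) \<Rightarrow> 'r set \<Rightarrow> bool" where
  "rows_lin_indep V M F \<longleftrightarrow>
     (\<forall>c. (\<forall>x\<in>V. (\<Sum>r\<in>F. c r * M r x) = 0) \<longrightarrow> (\<forall>r\<in>F. c r = 0))"

definition row_matroid_rank :: "'r set \<Rightarrow> 'a set \<Rightarrow> ('r \<Rightarrow> 'a \<Rightarrow> real) \<Rightarrow> nat" where
  "row_matroid_rank E V M = Max {card F | F. F \<subseteq> E \<and> rows_lin_indep V M F}"

end

(*
  Every row of A(H,p) is supported on its hyperedge, so the rank is at most |V|, and it is
  |V| as soon as every unit vector e_v lies in the row space.

  By Cramer's rule applied to a bordered Gram system, each coefficient alpha_x times a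
  determinant is a polynomial in the coordinates of p, and the determinant is itself such a
  polynomial; a polynomial that is nonzero at one explicit configuration is nonzero at the
  generic p. This gives (i) alpha_x <> 0 for every x in every hyperedge, and (ii) for each
  copy S of K_(k+1)^k, the square block formed by the rows of the k+1 faces of S on the
  columns S is invertible.

  By (ii), e_v lies in the row space for v in S. By (i) this propagates along strong
  adjacency: if D' = (D - {x}) + {y} and e_v lies in the row space for all v in D, then so
  does e_y, because the row of D' is supported on D' and has a nonzero entry at y. Every
  hyperedge is reached from a face of the simplex of its component.
*)
theory Submission
  imports Defs "Jordan_Normal_Form.Determinant" "HOL-Library.Function_Algebras"
    "HOL-Library.Indicator_Function"
begin

section \<open>Polynomials in the coordinates of a configuration\<close>

inductive coord_poly :: "'a set \<Rightarrow> nat \<Rightarrow> (('a \<Rightarrow> nat \<Rightarrow> real) \<Rightarrow> real) \<Rightarrow> bool"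
  for V d where
  coord_poly_const: "coord_poly V d (\<lambda>q. of_rat r)"
| coord_poly_coord: "v \<in> V \<Longrightarrow> i < d \<Longrightarrow> coord_poly V d (\<lambda>q. q v i)"
| coord_poly_add: "coord_poly V d f \<Longrightarrow> coord_poly V d g \<Longrightarrow> coord_poly V d (\<lambda>q. f q + g q)"
| coord_poly_mult: "coord_poly V d f \<Longrightarrow> coord_poly V d g \<Longrightarrow> coord_poly V d (\<lambda>q. f q * g q)"

lemma coord_poly_of_int: "coord_poly V d (\<lambda>q. of_int z)"
  using coord_poly_const[of V d "of_int z"] by simp

lemma coord_poly_Ints: "c \<in> \<int> \<Longrightarrow> coord_poly V d (\<lambda>q. c)"
  by (metis Ints_cases coord_poly_of_int)

lemma coord_poly_sum:
  "finite S \<Longrightarrow> (\<And>s. s \<in> S \<Longrightarrow> coord_poly V d (f s)) \<Longrightarrow> coord_poly V d (\<lambda>q. \<Sum>s\<in>S. f s q)"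
  by (induction S rule: finite_induct) (auto intro: coord_poly_Ints coord_poly_add)

lemma coord_poly_prod:
  "finite S \<Longrightarrow> (\<And>s. s \<in> S \<Longrightarrow> coord_poly V d (f s)) \<Longrightarrow> coord_poly V d (\<lambda>q. \<Prod>s\<in>S. f s q)"
  by (induction S rule: finite_induct) (auto intro: coord_poly_Ints coord_poly_mult)

lemma coord_poly_det:
  assumes "\<And>q. A q \<in> carrier_mat n n"
    and "\<And>i j. i < n \<Longrightarrow> j < n \<Longrightarrow> coord_poly V d (\<lambda>q. A q $$ (i, j))"
  shows "coord_poly V d (\<lambda>q. det (A q))"
proof -
  have "coord_poly V d
      (\<lambda>q. \<Sum>\<pi>\<in>{\<pi>. \<pi> permutes {0..<n}}. of_int (sign \<pi>) * (\<Prod>i = 0..<n. A q $$ (i, \<pi> i)))"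
  proof (rule coord_poly_sum)
    fix \<pi> assume "\<pi> \<in> {\<pi>. \<pi> permutes {0..<n}}"
    then have "i < n \<Longrightarrow> \<pi> i < n" for i by (simp add: permutes_in_image)
    then show "coord_poly V d (\<lambda>q. of_int (sign \<pi>) * (\<Prod>i = 0..<n. A q $$ (i, \<pi> i)))"
      by (intro coord_poly_mult coord_poly_of_int coord_poly_prod) (auto intro: assms(2))
  qed (simp add: finite_permutations)
  then show ?thesis using det_def'[OF assms(1)] by simp
qed

definition monomial_in :: "'a set \<Rightarrow> nat \<Rightarrow> ('a \<times> nat \<Rightarrow> nat) \<Rightarrow> bool" where
  "monomial_in V d m \<longleftrightarrow> finite {i. m i \<noteq> 0} \<and> {i. m i \<noteq> 0} \<subseteq> V \<times> {..<d}"

definition monomial_at :: "('a \<times> nat \<Rightarrow> nat) \<Rightarrow> ('a \<Rightarrow> nat \<Rightarrow> real) \<Rightarrow> real" where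
  "monomial_at m q = (\<Prod>i\<in>{i. m i \<noteq> 0}. (\<lambda>(v, l). q v l) i ^ m i)"

definition monomial_expansion :: "'a set \<Rightarrow> nat \<Rightarrow> (('a \<Rightarrow> nat \<Rightarrow> real) \<Rightarrow> real) \<Rightarrow> bool" where
  "monomial_expansion V d f \<longleftrightarrow> (\<exists>M (c :: ('a \<times> nat \<Rightarrow> nat) \<Rightarrow> rat). finite M \<and>
     (\<forall>m\<in>M. monomial_in V d m) \<and> (\<forall>q. f q = (\<Sum>m\<in>M. of_rat (c m) * monomial_at m q)))"

lemma monomial_at_superset:
  assumes "finite T" "{i. m i \<noteq> 0} \<subseteq> T"
  shows "monomial_at m q = (\<Prod>i\<in>T. (\<lambda>(v, l). q v l) i ^ m i)"
  unfolding monomial_at_def by (rule prod.mono_neutral_left[OF assms]) auto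

lemma monomial_at_add:
  assumes "finite {i. a i \<noteq> 0}" "finite {i. b i \<noteq> 0}"
  shows "monomial_at (a + b) q = monomial_at a q * monomial_at b q"
proof -
  let ?T = "{i. a i \<noteq> 0} \<union> {i. b i \<noteq> 0}"
  have T: "finite ?T" using assms by auto
  have "monomial_at (a + b) q = (\<Prod>i\<in>?T. (\<lambda>(v, l). q v l) i ^ (a i + b i))"
    by (subst monomial_at_superset[OF T]) auto
  also have "\<dots> = monomial_at a q * monomial_at b q"
    by (simp add: power_add prod.distrib monomial_at_superset[OF T])
  finally show ?thesis .
qed

lemma monomial_in_add: "monomial_in V d a \<Longrightarrow> monomial_in V d b \<Longrightarrow> monomial_in V d (a + b)"
  unfolding monomial_in_def by (auto intro: finite_subset[of _ "{i. a i \<noteq> 0} \<union> {i. b i \<noteq> 0}"])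

lemma monomial_expansion_term:
  assumes "monomial_in V d m"
  shows "monomial_expansion V d (\<lambda>q. of_rat r * monomial_at m q)"
  unfolding monomial_expansion_def using assms
  by (intro exI[of _ "{m}"] exI[of _ "\<lambda>_. r"]) simp

lemma monomial_expansion_add:
  assumes "monomial_expansion V d f" "monomial_expansion V d g"
  shows "monomial_expansion V d (\<lambda>q. f q + g q)"
proof -
  obtain M1 c1 where 1: "finite M1" "\<forall>m\<in>M1. monomial_in V d m"
    "\<forall>q. f q = (\<Sum>m\<in>M1. of_rat (c1 m) * monomial_at m q)"
    using assms(1) unfolding monomial_expansion_def by blast
  obtain M2 c2 where 2: "finite M2" "\<forall>m\<in>M2. monomial_in V d m"
    "\<forall>q. g q = (\<Sum>m\<in>M2. of_rat (c2 m) * monomial_at m q)"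
    using assms(2) unfolding monomial_expansion_def by blast
  define c where "c m = (if m \<in> M1 then c1 m else 0) + (if m \<in> M2 then c2 m else 0)" for m
  have "(\<Sum>m\<in>M1 \<union> M2. of_rat (if m \<in> M1 then c1 m else 0) * monomial_at m q)
      = (\<Sum>m\<in>M1. of_rat (c1 m) * monomial_at m q)"
    and "(\<Sum>m\<in>M1 \<union> M2. of_rat (if m \<in> M2 then c2 m else 0) * monomial_at m q)
      = (\<Sum>m\<in>M2. of_rat (c2 m) * monomial_at m q)" for q
    by (rule sum.mono_neutral_cong_right; use 1 2 in auto)+
  then have "f q + g q = (\<Sum>m\<in>M1 \<union> M2. of_rat (c m) * monomial_at m q)" for q
    unfolding c_def of_rat_add distrib_right sum.distrib using 1 2 by simp
  then show ?thesis
    unfolding monomial_expansion_def using 1 2 by (intro exI[of _ "M1 \<union> M2"] exI[of _ c]) auto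
qed

lemma monomial_expansion_sum:
  "finite S \<Longrightarrow> (\<And>s. s \<in> S \<Longrightarrow> monomial_expansion V d (f s))
    \<Longrightarrow> monomial_expansion V d (\<lambda>q. \<Sum>s\<in>S. f s q)"
proof (induction S rule: finite_induct)
  case empty
  show ?case unfolding monomial_expansion_def by (intro exI[of _ "{}"]) simp
qed (simp add: monomial_expansion_add)

lemma monomial_expansion_mult_term:
  assumes f: "monomial_expansion V d f" and \<mu>: "monomial_in V d \<mu>"
  shows "monomial_expansion V d (\<lambda>q. f q * (of_rat r * monomial_at \<mu> q))"
proof -
  obtain M c where M: "finite M" "\<forall>m\<in>M. monomial_in V d m"
    "\<forall>q. f q = (\<Sum>m\<in>M. of_rat (c m) * monomial_at m q)"
    using f unfolding monomial_expansion_def by blast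
  have inj: "inj_on (\<lambda>m. m + \<mu>) M" by (rule inj_onI) (simp add: fun_eq_iff)
  define c' where "c' m' = c (m' - \<mu>) * r" for m'
  have "f q * (of_rat r * monomial_at \<mu> q)
      = (\<Sum>m\<in>M. of_rat (c' (m + \<mu>)) * monomial_at (m + \<mu>) q)" for q
    using M \<mu> unfolding c'_def monomial_in_def
    by (simp add: sum_distrib_left monomial_at_add of_rat_mult mult_ac)
  also have "\<dots> q = (\<Sum>m'\<in>(\<lambda>m. m + \<mu>) ` M. of_rat (c' m') * monomial_at m' q)" for q
    by (simp add: sum.reindex[OF inj])
  finally show ?thesis
    unfolding monomial_expansion_def using M \<mu>
    by (intro exI[of _ "(\<lambda>m. m + \<mu>) ` M"] exI[of _ c']) (auto intro: monomial_in_add)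
qed

lemma monomial_expansion_mult:
  assumes f: "monomial_expansion V d f" and g: "monomial_expansion V d g"
  shows "monomial_expansion V d (\<lambda>q. f q * g q)"
proof -
  obtain M c where M: "finite M" "\<forall>m\<in>M. monomial_in V d m"
    "\<forall>q. g q = (\<Sum>m\<in>M. of_rat (c m) * monomial_at m q)"
    using g unfolding monomial_expansion_def by blast
  have "monomial_expansion V d (\<lambda>q. \<Sum>m\<in>M. f q * (of_rat (c m) * monomial_at m q))"
    using M by (intro monomial_expansion_sum monomial_expansion_mult_term[OF f]) auto
  then show ?thesis using M(3) by (simp add: sum_distrib_left)
qed

lemma coord_poly_monomial_expansion: "coord_poly V d f \<Longrightarrow> monomial_expansion V d f"
proof (induction rule: coord_poly.induct)
  case (coord_poly_const r)
  show ?case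
    using monomial_expansion_term[of V d 0 r] by (simp add: monomial_in_def monomial_at_def)
next
  case (coord_poly_coord v i)
  let ?m = "\<lambda>j. if j = (v, i) then 1 else 0 :: nat"
  have "{j. ?m j \<noteq> 0} = {(v, i)}" by auto
  then have "monomial_in V d ?m" "monomial_at ?m q = q v i" for q
    using coord_poly_coord by (simp_all add: monomial_in_def monomial_at_def)
  then show ?case using monomial_expansion_term[of V d ?m 1] by simp
qed (simp_all add: monomial_expansion_add monomial_expansion_mult)

lemma generic_coord_poly_nonzero:
  assumes "generic_config d V p" "coord_poly V d f" "f q \<noteq> 0"
  shows "f p \<noteq> 0"
proof
  assume "f p = 0"
  obtain M c where M: "finite M" "\<forall>m\<in>M. monomial_in V d m"
    "\<forall>q. f q = (\<Sum>m\<in>M. of_rat (c m) * monomial_at m q)"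
    using coord_poly_monomial_expansion[OF assms(2)] unfolding monomial_expansion_def by blast
  then have "\<forall>m\<in>M. c m = 0"
    using assms(1) \<open>f p = 0\<close>
    unfolding generic_config_def alg_indep_over_Q_def monomial_in_def monomial_at_def by auto
  then show False using M(3) assms(3) by simp
qed

definition set_enum :: "'a set \<Rightarrow> nat \<Rightarrow> 'a" where
  "set_enum F = (SOME h. bij_betw h {0..<card F} F)"

definition set_index :: "'a set \<Rightarrow> 'a \<Rightarrow> nat" where
  "set_index F = the_inv_into {0..<card F} (set_enum F)"

lemma bij_betw_set_enum: "finite F \<Longrightarrow> bij_betw (set_enum F) {0..<card F} F"
  unfolding set_enum_def using someI_ex[OF ex_bij_betw_nat_finite[of F]] by simp

lemma set_enum_in: "finite F \<Longrightarrow> i < card F \<Longrightarrow> set_enum F i \<in> F"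
  using bij_betw_set_enum bij_betwE by fastforce

lemma set_index_less: "finite F \<Longrightarrow> x \<in> F \<Longrightarrow> set_index F x < card F"
  unfolding set_index_def using bij_betw_the_inv_into[OF bij_betw_set_enum] bij_betwE by fastforce

lemma set_enum_set_index: "finite F \<Longrightarrow> x \<in> F \<Longrightarrow> set_enum F (set_index F x) = x"
  unfolding set_index_def using f_the_inv_into_f_bij_betw[OF bij_betw_set_enum] by metis

lemma set_index_set_enum: "finite F \<Longrightarrow> i < card F \<Longrightarrow> set_index F (set_enum F i) = i"
  unfolding set_index_def
  using the_inv_into_f_f[OF bij_betw_imp_inj_on[OF bij_betw_set_enum]] by fastforce

lemma sum_set_enum: "finite F \<Longrightarrow> (\<Sum>i = 0..<card F. g (set_enum F i)) = (\<Sum>x\<in>F. g x)"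
  by (rule sum.reindex_bij_betw[OF bij_betw_set_enum])

section \<open>Projection coefficients as the solution of a bordered Gram system\<close>

definition gram :: "nat \<Rightarrow> ('a \<Rightarrow> nat \<Rightarrow> real) \<Rightarrow> 'a \<Rightarrow> 'a \<Rightarrow> real" where
  "gram d q a b = (\<Sum>l<d. q a l * q b l)"

text \<open>The coefficients \<beta> of the projection of the origin onto the affine span of q(F) are
  characterised by \<Sum>\<beta> = 1 and by the point \<Sum> \<beta> z q z having the same inner product c with
  every q x. In the unknowns (\<beta>, c) this is a square linear system; its matrix is the Gram
  matrix of q(F) bordered by a column of -1 and a row of 1.\<close>

definition proj_system :: "nat \<Rightarrow> ('a \<Rightarrow> nat \<Rightarrow> real) \<Rightarrow> 'a set \<Rightarrow> ('a \<Rightarrow> real) \<Rightarrow> real \<Rightarrow> bool"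
  where "proj_system d q F \<beta> c \<longleftrightarrow>
    (\<Sum>x\<in>F. \<beta> x) = 1 \<and> (\<forall>x\<in>F. (\<Sum>z\<in>F. gram d q x z * \<beta> z) = c)"

definition bordered_gram :: "nat \<Rightarrow> ('a \<Rightarrow> nat \<Rightarrow> real) \<Rightarrow> 'a set \<Rightarrow> real mat" where
  "bordered_gram d q F = mat (card F + 1) (card F + 1) (\<lambda>(i, j).
     if i < card F then (if j < card F then gram d q (set_enum F i) (set_enum F j) else -1)
     else (if j < card F then 1 else 0))"

definition coeff_vec :: "'a set \<Rightarrow> ('a \<Rightarrow> real) \<Rightarrow> real \<Rightarrow> real vec" where
  "coeff_vec F \<beta> c = vec (card F + 1) (\<lambda>i. if i < card F then \<beta> (set_enum F i) else c)"

lemma bordered_gram_carrier [simp]: "bordered_gram d q F \<in> carrier_mat (card F + 1) (card F + 1)"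
  unfolding bordered_gram_def by simp

lemma coeff_vec_carrier [simp]: "coeff_vec F \<beta> c \<in> carrier_vec (card F + 1)"
  unfolding coeff_vec_def by simp

lemma coeff_vec_eq_iff:
  assumes "finite F"
  shows "coeff_vec F \<beta> c = coeff_vec F \<beta>' c' \<longleftrightarrow> (\<forall>x\<in>F. \<beta> x = \<beta>' x) \<and> c = c'"
proof
  assume eq: "coeff_vec F \<beta> c = coeff_vec F \<beta>' c'"
  have "\<beta> x = \<beta>' x" if "x \<in> F" for x
    using arg_cong[OF eq, of "\<lambda>v. v $ set_index F x"] that set_index_less[OF assms that]
    by (simp add: coeff_vec_def set_enum_set_index assms)
  moreover have "c = c'" using arg_cong[OF eq, of "\<lambda>v. v $ card F"] by (simp add: coeff_vec_def)
  ultimately show "(\<forall>x\<in>F. \<beta> x = \<beta>' x) \<and> c = c'" by blast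
qed (auto simp: coeff_vec_def set_enum_in assms)

lemma vec_eq_coeff_vec:
  assumes "finite F" "v \<in> carrier_vec (card F + 1)"
  shows "v = coeff_vec F (\<lambda>x. v $ set_index F x) (v $ card F)"
  using assms by (intro eq_vecI) (auto simp: coeff_vec_def set_index_set_enum less_Suc_eq)

lemma unit_vec_eq_coeff_vec: "unit_vec (card F + 1) (card F) = coeff_vec F (\<lambda>_. 0) 1"
  by (intro eq_vecI) (auto simp: coeff_vec_def)

lemma zero_vec_eq_coeff_vec: "0\<^sub>v (card F + 1) = coeff_vec F (\<lambda>_. 0) 0"
  by (intro eq_vecI) (auto simp: coeff_vec_def)

lemma bordered_gram_mult_coeff_vec:
  assumes "finite F"
  shows "bordered_gram d q F *\<^sub>v coeff_vec F \<beta> c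
    = coeff_vec F (\<lambda>x. (\<Sum>z\<in>F. gram d q x z * \<beta> z) - c) (\<Sum>x\<in>F. \<beta> x)"
proof (rule eq_vecI)
  fix i assume "i < dim_vec (coeff_vec F (\<lambda>x. (\<Sum>z\<in>F. gram d q x z * \<beta> z) - c) (\<Sum>x\<in>F. \<beta> x))"
  then have i: "i < card F + 1" by (simp add: coeff_vec_def)
  let ?B = "bordered_gram d q F"
  have dim: "dim_row ?B = card F + 1" "dim_col ?B = card F + 1"
    "dim_vec (coeff_vec F \<beta> c) = card F + 1"
    by (simp_all add: bordered_gram_def coeff_vec_def)
  have "(?B *\<^sub>v coeff_vec F \<beta> c) $ i = (\<Sum>j = 0..<card F + 1. ?B $$ (i, j) * coeff_vec F \<beta> c $ j)"
    using i dim by (subst index_mult_mat_vec) (auto simp: scalar_prod_def intro!: sum.cong)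
  also have "\<dots> = (\<Sum>j = 0..<card F. ?B $$ (i, j) * \<beta> (set_enum F j)) + ?B $$ (i, card F) * c"
    by (simp add: coeff_vec_def)
  also have "\<dots> = (if i < card F then (\<Sum>z\<in>F. gram d q (set_enum F i) z * \<beta> z) - c
      else (\<Sum>x\<in>F. \<beta> x))"
    using i sum_set_enum[OF assms, of "\<lambda>z. gram d q (set_enum F i) z * \<beta> z"]
      sum_set_enum[OF assms, of \<beta>]
    by (simp add: bordered_gram_def)
  finally show "(?B *\<^sub>v coeff_vec F \<beta> c) $ i
      = coeff_vec F (\<lambda>x. (\<Sum>z\<in>F. gram d q x z * \<beta> z) - c) (\<Sum>x\<in>F. \<beta> x) $ i"
    using i by (simp add: coeff_vec_def)
qed (simp add: bordered_gram_def coeff_vec_def)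


lemma proj_system_iff:
  assumes "finite F"
  shows "proj_system d q F \<beta> c
    \<longleftrightarrow> bordered_gram d q F *\<^sub>v coeff_vec F \<beta> c = unit_vec (card F + 1) (card F)"
  unfolding bordered_gram_mult_coeff_vec[OF assms] unit_vec_eq_coeff_vec
    coeff_vec_eq_iff[OF assms] proj_system_def
  by auto

lemma proj_system_cong:
  "(\<And>x. x \<in> F \<Longrightarrow> \<beta> x = \<beta>' x) \<Longrightarrow> proj_system d q F \<beta> c = proj_system d q F \<beta>' c"
  unfolding proj_system_def by (simp cong: sum.cong)

lemma gram_quadratic_form:
  "(\<Sum>x\<in>F. \<beta> x * (\<Sum>z\<in>F. gram d q x z * \<beta> z)) = (\<Sum>l<d. (\<Sum>x\<in>F. \<beta> x * q x l)\<^sup>2)"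
proof -
  have "(\<Sum>x\<in>F. \<beta> x * (\<Sum>z\<in>F. gram d q x z * \<beta> z))
      = (\<Sum>x\<in>F. \<Sum>z\<in>F. \<Sum>l<d. (\<beta> x * q x l) * (\<beta> z * q z l))"
    unfolding gram_def sum_distrib_left sum_distrib_right
    by (intro sum.cong refl) (simp add: mult_ac)
  also have "\<dots> = (\<Sum>l<d. \<Sum>x\<in>F. \<Sum>z\<in>F. (\<beta> x * q x l) * (\<beta> z * q z l))"
    by (simp add: sum.swap[of _ "{..<d}"])
  also have "\<dots> = (\<Sum>l<d. (\<Sum>x\<in>F. \<beta> x * q x l)\<^sup>2)"
    by (simp add: power2_eq_square sum_product)
  finally show ?thesis .
qed

lemma bordered_gram_det_nonzero:
  assumes F: "finite F" "F \<noteq> {}"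
    and aff_indep: "\<And>\<beta>. (\<Sum>x\<in>F. \<beta> x) = 0 \<Longrightarrow> \<forall>l<d. (\<Sum>x\<in>F. \<beta> x * q x l) = 0 \<Longrightarrow> \<forall>x\<in>F. \<beta> x = 0"
  shows "det (bordered_gram d q F) \<noteq> 0"
proof
  assume "det (bordered_gram d q F) = 0"
  then obtain v where v: "v \<in> carrier_vec (card F + 1)" "v \<noteq> 0\<^sub>v (card F + 1)"
    "bordered_gram d q F *\<^sub>v v = 0\<^sub>v (card F + 1)"
    using det_0_iff_vec_prod_zero[OF bordered_gram_carrier] by blast
  define \<beta> where "\<beta> x = v $ set_index F x" for x
  define c where "c = v $ card F"
  have v_eq: "v = coeff_vec F \<beta> c"
    unfolding \<beta>_def c_def by (rule vec_eq_coeff_vec[OF F(1) v(1)])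
  have sum0: "(\<Sum>x\<in>F. \<beta> x) = 0" and sys: "\<forall>x\<in>F. (\<Sum>z\<in>F. gram d q x z * \<beta> z) = c"
    using v(3) unfolding v_eq bordered_gram_mult_coeff_vec[OF F(1)] zero_vec_eq_coeff_vec
      coeff_vec_eq_iff[OF F(1)] by auto
  have "(\<Sum>l<d. (\<Sum>x\<in>F. \<beta> x * q x l)\<^sup>2) = (\<Sum>x\<in>F. \<beta> x * c)"
    unfolding gram_quadratic_form[symmetric] using sys by (intro sum.cong) auto
  also have "\<dots> = 0" using sum0 by (simp add: sum_distrib_right[symmetric])
  finally
  have "\<forall>l<d. (\<Sum>x\<in>F. \<beta> x * q x l) = 0"
    by (simp add: sum_nonneg_eq_0_iff)
  then have \<beta>0: "\<forall>x\<in>F. \<beta> x = 0" using aff_indep sum0 by blast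
  then have "c = 0" using sys F(2) by auto
  then have "v = 0\<^sub>v (card F + 1)"
    unfolding v_eq zero_vec_eq_coeff_vec coeff_vec_eq_iff[OF F(1)] using \<beta>0 by simp
  with v(2) show False ..
qed

lemma proj_system_cramer:
  assumes "finite F" "proj_system d q F \<beta> c" "x \<in> F"
  shows "det (replace_col (bordered_gram d q F) (unit_vec (card F + 1) (card F)) (set_index F x))
    = \<beta> x * det (bordered_gram d q F)"
proof -
  have "det (replace_col (bordered_gram d q F) (bordered_gram d q F *\<^sub>v coeff_vec F \<beta> c)
        (set_index F x))
      = coeff_vec F \<beta> c $ set_index F x * det (bordered_gram d q F)"
    using set_index_less[OF assms(1,3)]
    by (intro cramer_lemma_mat[OF bordered_gram_carrier coeff_vec_carrier]) auto
  then show ?thesis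
    using assms set_index_less[OF assms(1,3)]
    by (simp add: proj_system_iff coeff_vec_def set_enum_set_index)
qed

lemma proj_system_unique:
  assumes "finite F" "det (bordered_gram d q F) \<noteq> 0"
    and "proj_system d q F \<beta> c" "proj_system d q F \<beta>' c'" "x \<in> F"
  shows "\<beta> x = \<beta>' x"
  using proj_system_cramer[OF assms(1,3,5)] proj_system_cramer[OF assms(1,4,5)] assms(2) by simp

lemma proj_system_solvable:
  assumes "finite F" "det (bordered_gram d q F) \<noteq> 0"
  shows "\<exists>\<beta> c. proj_system d q F \<beta> c"
proof -
  let ?B = "bordered_gram d q F" and ?n = "card F + 1" and ?e = "unit_vec (card F + 1) (card F)"
  obtain B' where B': "B' \<in> carrier_mat ?n ?n" "?B * B' = 1\<^sub>m ?n"
    using det_non_zero_imp_unit[OF bordered_gram_carrier assms(2), of undefined]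
    unfolding Units_def by (auto simp: ring_mat_simps)
  define v where "v = B' *\<^sub>v ?e"
  have v: "v \<in> carrier_vec ?n" using B'(1) by (simp add: v_def)
  have "?B *\<^sub>v v = ?e"
    using B' by (simp add: v_def assoc_mult_mat_vec[symmetric, OF bordered_gram_carrier B'(1)])
  then have "proj_system d q F (\<lambda>x. v $ set_index F x) (v $ card F)"
    unfolding proj_system_iff[OF assms(1)] using vec_eq_coeff_vec[OF assms(1) v] by simp
  then show ?thesis by blast
qed

lemma gram_sum: "(\<Sum>z\<in>F. gram d q x z * \<beta> z) = (\<Sum>l<d. (\<Sum>z\<in>F. \<beta> z * q z l) * q x l)"
  unfolding gram_def sum_distrib_right by (subst sum.swap) (intro sum.cong refl, simp add: mult_ac)

lemma proj_coeffs_condition_iff: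
  assumes "F \<noteq> {}"
  shows "((\<forall>x. x \<notin> F \<longrightarrow> \<alpha> x = 0) \<and> (\<Sum>x\<in>F. \<alpha> x) = 1 \<and>
      (\<forall>x\<in>F. \<forall>y\<in>F. (\<Sum>i<d. (\<Sum>z\<in>F. \<alpha> z * q z i) * (q x i - q y i)) = 0))
    \<longleftrightarrow> (\<forall>x. x \<notin> F \<longrightarrow> \<alpha> x = 0) \<and> (\<exists>c. proj_system d q F \<alpha> c)"
proof -
  let ?Q = "\<lambda>x. \<Sum>z\<in>F. gram d q x z * \<alpha> z"
  have diff: "(\<Sum>i<d. (\<Sum>z\<in>F. \<alpha> z * q z i) * (q x i - q y i)) = ?Q x - ?Q y" for x y
    unfolding gram_sum right_diff_distrib by (rule sum_subtractf)
  obtain x0 where x0: "x0 \<in> F" using assms by blast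
  have const: "(\<forall>x\<in>F. \<forall>y\<in>F. ?Q x - ?Q y = 0) \<longleftrightarrow> (\<exists>c. \<forall>x\<in>F. ?Q x = c)"
  proof
    assume all: "\<forall>x\<in>F. \<forall>y\<in>F. ?Q x - ?Q y = 0"
    have "?Q x = ?Q x0" if "x \<in> F" for x
      using bspec[OF bspec[OF all that] x0] by (simp only: right_minus_eq)
    then show "\<exists>c. \<forall>x\<in>F. ?Q x = c" by blast
  next
    assume "\<exists>c. \<forall>x\<in>F. ?Q x = c"
    then show "\<forall>x\<in>F. \<forall>y\<in>F. ?Q x - ?Q y = 0" by force
  qed
  show ?thesis unfolding proj_system_def diff const by blast
qed


lemma proj_coeffs_eq:
  assumes F: "finite F" and det: "det (bordered_gram d q F) \<noteq> 0"
    and sys: "proj_system d q F \<beta> c" and x: "x \<in> F"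
  shows "proj_coeffs d q F x = \<beta> x"
proof -
  define \<alpha> where "\<alpha> x = (if x \<in> F then \<beta> x else 0)" for x
  let ?cond = "\<lambda>\<alpha>. (\<forall>x. x \<notin> F \<longrightarrow> \<alpha> x = 0) \<and> (\<exists>c. proj_system d q F \<alpha> c)"
  have ne: "F \<noteq> {}" using x by blast
  have sys\<alpha>: "proj_system d q F \<alpha> c"
    using sys proj_system_cong[of F \<alpha> \<beta>] by (simp add: \<alpha>_def)
  then have cond: "?cond \<alpha>" by (auto simp: \<alpha>_def)
  have unique: "\<alpha>' = \<alpha>" if cond': "?cond \<alpha>'" for \<alpha>'
  proof
    fix y
    show "\<alpha>' y = \<alpha> y"
    proof (cases "y \<in> F")
      case True
      obtain c' where "proj_system d q F \<alpha>' c'" using cond' by blast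
      from proj_system_unique[OF F det this sys\<alpha> True] show ?thesis .
    next
      case False
      then show ?thesis using cond' by (simp add: \<alpha>_def)
    qed
  qed
  have "proj_coeffs d q F = \<alpha>"
    unfolding proj_coeffs_def proj_coeffs_condition_iff[OF ne]
    by (rule the_equality[of ?cond \<alpha>, OF cond unique])
  then show ?thesis using x by (simp add: \<alpha>_def)
qed

lemma proj_coeffs_proj_system:
  assumes "finite F" "det (bordered_gram d q F) \<noteq> 0"
  shows "\<exists>c. proj_system d q F (proj_coeffs d q F) c"
proof -
  obtain \<beta> c where sys: "proj_system d q F \<beta> c" using proj_system_solvable[OF assms] by blast
  then have "proj_system d q F (proj_coeffs d q F) c"
    using sys proj_system_cong[of F "proj_coeffs d q F" \<beta>] proj_coeffs_eq[OF assms sys] by simp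
  then show ?thesis ..
qed


section \<open>Generic configurations\<close>

lemma coord_poly_gram: "a \<in> V \<Longrightarrow> b \<in> V \<Longrightarrow> coord_poly V d (\<lambda>q. gram d q a b)"
  unfolding gram_def by (intro coord_poly_sum coord_poly_mult coord_poly_coord) auto

lemma coord_poly_bordered_gram_entry:
  assumes "finite F" "F \<subseteq> V" "i < card F + 1" "j < card F + 1"
  shows "coord_poly V d (\<lambda>q. bordered_gram d q F $$ (i, j))"
proof (cases "i < card F \<and> j < card F")
  case True
  then show ?thesis
    using assms set_enum_in[OF assms(1)] by (auto simp: bordered_gram_def intro!: coord_poly_gram)
next
  case False
  then show ?thesis
    using assms by (cases "i < card F") (auto simp: bordered_gram_def intro: coord_poly_Ints)
qed

lemma coord_poly_det_bordered_gram:
  "finite F \<Longrightarrow> F \<subseteq> V \<Longrightarrow> coord_poly V d (\<lambda>q. det (bordered_gram d q F))"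
  by (rule coord_poly_det[OF bordered_gram_carrier]) (rule coord_poly_bordered_gram_entry; simp)

lemma coord_poly_det_cramer_numerator:
  assumes "finite F" "F \<subseteq> V"
  shows "coord_poly V d
    (\<lambda>q. det (replace_col (bordered_gram d q F) (unit_vec (card F + 1) (card F)) t))"
proof (rule coord_poly_det)
  show "replace_col (bordered_gram d q F) (unit_vec (card F + 1) (card F)) t
      \<in> carrier_mat (card F + 1) (card F + 1)" for q
    by (simp add: replace_col_def bordered_gram_def)
  fix i j assume ij: "i < card F + 1" "j < card F + 1"
  then have "replace_col (bordered_gram d q F) (unit_vec (card F + 1) (card F)) t $$ (i, j)
      = (if j = t then unit_vec (card F + 1) (card F) $ i else bordered_gram d q F $$ (i, j))" for q
    by (simp add: replace_col_def bordered_gram_def)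
  then show "coord_poly V d
      (\<lambda>q. replace_col (bordered_gram d q F) (unit_vec (card F + 1) (card F)) t $$ (i, j))"
    using ij assms by (cases "j = t") (auto intro: coord_poly_Ints coord_poly_bordered_gram_entry)
qed

text \<open>The witness configuration for genericity statements about a single hyperedge.\<close>

definition basis_config :: "'a set \<Rightarrow> 'a \<Rightarrow> nat \<Rightarrow> real" where
  "basis_config F v l = (if v \<in> F \<and> l = set_index F v then 1 else 0)"

lemma basis_config_eq:
  assumes "finite F" "x \<in> F"
  shows "basis_config F x l = (if l = set_index F x then 1 else 0)"
  using assms by (simp add: basis_config_def)

lemma sum_basis_config:
  assumes "finite F" "l < card F"
  shows "(\<Sum>z\<in>F. \<beta> z * basis_config F z l) = \<beta> (set_enum F l)"
proof -
  have "l = set_index F z \<longleftrightarrow> z = set_enum F l" if "z \<in> F" for z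
    using that assms set_enum_set_index set_index_set_enum by metis
  then have "(\<Sum>z\<in>F. \<beta> z * basis_config F z l) = (\<Sum>z\<in>F. if z = set_enum F l then \<beta> z else 0)"
    by (intro sum.cong refl) (simp add: basis_config_eq assms(1))
  then show ?thesis using assms set_enum_in[OF assms] by simp
qed

lemma gram_basis_config:
  assumes "finite F" "card F \<le> d" "x \<in> F" "z \<in> F"
  shows "gram d (basis_config F) x z = (if z = x then 1 else 0)"
proof -
  have "gram d (basis_config F) x z
      = (\<Sum>l<d. if l = set_index F x then basis_config F z l else 0)"
    unfolding gram_def by (rule sum.cong) (simp_all add: basis_config_eq assms)
  also have "\<dots> = basis_config F z (set_index F x)"
    using set_index_less[OF assms(1,3)] assms(2) by simp
  also have "\<dots> = (if z = x then 1 else 0)"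
    using assms set_enum_set_index by (metis basis_config_eq)
  finally show ?thesis .
qed

lemma basis_config_proj_system:
  assumes "finite F" "F \<noteq> {}" "card F \<le> d"
  shows "proj_system d (basis_config F) F (\<lambda>_. 1 / card F) (1 / card F)"
proof -
  have "(\<Sum>z\<in>F. gram d (basis_config F) x z * (1 / card F)) = 1 / card F" if "x \<in> F" for x
  proof -
    have "(\<Sum>z\<in>F. gram d (basis_config F) x z * (1 / card F))
        = (\<Sum>z\<in>F. if z = x then 1 / card F else 0)"
      by (rule sum.cong) (simp_all add: gram_basis_config assms that)
    then show ?thesis using assms(1) that by simp
  qed
  then show ?thesis using assms by (simp add: proj_system_def)
qed

lemma basis_config_det_nonzero:
  assumes "finite F" "F \<noteq> {}" "card F \<le> d"
  shows "det (bordered_gram d (basis_config F) F) \<noteq> 0"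
proof (rule bordered_gram_det_nonzero[OF assms(1,2)])
  fix \<beta> assume \<beta>: "\<forall>l<d. (\<Sum>x\<in>F. \<beta> x * basis_config F x l) = 0"
  show "\<forall>x\<in>F. \<beta> x = 0"
  proof
    fix x assume x: "x \<in> F"
    have i: "set_index F x < card F" by (rule set_index_less[OF assms(1) x])
    then have "(\<Sum>z\<in>F. \<beta> z * basis_config F z (set_index F x)) = 0" using \<beta> assms(3) by simp
    then show "\<beta> x = 0"
      unfolding sum_basis_config[OF assms(1) i] set_enum_set_index[OF assms(1) x] .
  qed
qed

lemma generic_det_bordered_gram_nonzero:
  assumes "generic_config d V p" "finite F" "F \<subseteq> V" "F \<noteq> {}" "card F \<le> d"
  shows "det (bordered_gram d p F) \<noteq> 0"
  using generic_coord_poly_nonzero[OF assms(1) coord_poly_det_bordered_gram[OF assms(2,3)]]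
    basis_config_det_nonzero[OF assms(2,4,5)] by blast

text \<open>By Cramer's rule the numerator polynomial is the coefficient times the nonzero
  determinant, both at p and at the witness, where the coefficient is 1 / card F.\<close>

lemma generic_proj_coeffs_nonzero:
  assumes p: "generic_config d V p" and F: "finite F" "F \<subseteq> V" "card F \<le> d" and y: "y \<in> F"
  shows "proj_coeffs d p F y \<noteq> 0"
proof -
  have ne: "F \<noteq> {}" using y by blast
  let ?num = "\<lambda>q. det (replace_col (bordered_gram d q F) (unit_vec (card F + 1) (card F))
    (set_index F y))"
  have det_p: "det (bordered_gram d p F) \<noteq> 0"
    by (rule generic_det_bordered_gram_nonzero[OF p F(1,2) ne F(3)])
  obtain c where "proj_system d p F (proj_coeffs d p F) c"
    using proj_coeffs_proj_system[OF F(1) det_p] by blast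
  then have num_p: "?num p = proj_coeffs d p F y * det (bordered_gram d p F)"
    by (rule proj_system_cramer[OF F(1) _ y])
  have "?num (basis_config F) = 1 / card F * det (bordered_gram d (basis_config F) F)"
    by (rule proj_system_cramer[OF F(1) basis_config_proj_system[OF F(1) ne F(3)] y])
  then have "?num (basis_config F) \<noteq> 0"
    using basis_config_det_nonzero[OF F(1) ne F(3)] F(1) ne by simp
  then have "?num p \<noteq> 0"
    by (rule generic_coord_poly_nonzero[OF p coord_poly_det_cramer_numerator[OF F(1,2)]])
  then show ?thesis using num_p by simp
qed


section \<open>Row spaces\<close>

definition scale_fun :: "real \<Rightarrow> ('x \<Rightarrow> real) \<Rightarrow> 'x \<Rightarrow> real" where
  "scale_fun c f = (\<lambda>x. c * f x)"

interpretation fun_vs: vector_space "scale_fun :: real \<Rightarrow> ('x \<Rightarrow> real) \<Rightarrow> 'x \<Rightarrow> real"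
  by unfold_locales (auto simp: scale_fun_def fun_eq_iff algebra_simps)

lemma sum_fun_apply: "(\<Sum>w\<in>W. f w) x = (\<Sum>w\<in>W. f w x)"
  by (induction W rule: infinite_finite_induct) auto

lemma fun_eq_sum_indicator:
  assumes "finite D" "\<And>x. x \<notin> D \<Longrightarrow> f x = 0"
  shows "f = (\<Sum>v\<in>D. scale_fun (f v) (indicator {v}))"
proof
  fix x
  have "(\<Sum>v\<in>D. scale_fun (f v) (indicator {v})) x = (\<Sum>v\<in>D. f v * indicator {v} x)"
    by (simp add: sum_fun_apply scale_fun_def)
  also have "\<dots> = (\<Sum>v\<in>D. if v = x then f v else 0)"
    by (rule sum.cong) (auto simp: indicator_def)
  also have "\<dots> = f x" using assms by (auto simp: sum.delta)
  finally show "f x = (\<Sum>v\<in>D. scale_fun (f v) (indicator {v})) x" by simp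
qed

lemma span_indicators:
  assumes "finite D" "\<And>x. x \<notin> D \<Longrightarrow> f x = 0"
  shows "f \<in> fun_vs.span ((\<lambda>v. indicator {v}) ` D)"
proof -
  have "(\<Sum>v\<in>D. scale_fun (f v) (indicator {v})) \<in> fun_vs.span ((\<lambda>v. indicator {v}) ` D)"
    by (rule fun_vs.span_sum, rule fun_vs.span_scale, rule fun_vs.span_base) simp
  then show ?thesis using fun_eq_sum_indicator[OF assms] by simp
qed

lemma indicator_in_span_by_support:
  assumes "finite D" "\<And>x. x \<notin> D \<Longrightarrow> f x = 0" "f \<in> W" "f y \<noteq> 0" "y \<in> D"
    and "\<And>v. v \<in> D - {y} \<Longrightarrow> indicator {v} \<in> fun_vs.span W"
  shows "indicator {y} \<in> fun_vs.span W"
proof -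
  let ?rest = "\<Sum>v\<in>D - {y}. scale_fun (f v) (indicator {v})"
  have "f = (\<Sum>v\<in>D. scale_fun (f v) (indicator {v}))" by (rule fun_eq_sum_indicator[OF assms(1,2)])
  also have "\<dots> = scale_fun (f y) (indicator {y}) + ?rest" by (rule sum.remove[OF assms(1,5)])
  finally have "scale_fun (f y) (indicator {y}) = f - ?rest" by (simp add: eq_diff_eq)
  also have "\<dots> \<in> fun_vs.span W"
  proof (rule fun_vs.span_diff)
    show "f \<in> fun_vs.span W" using assms(3) by (rule fun_vs.span_base)
    show "?rest \<in> fun_vs.span W"
      by (rule fun_vs.span_sum, rule fun_vs.span_scale) (rule assms(6))
  qed
  finally have "scale_fun (1 / f y) (scale_fun (f y) (indicator {y})) \<in> fun_vs.span W"
    by (rule fun_vs.span_scale)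
  then show ?thesis using assms(4) by (simp add: scale_fun_def)
qed

lemma rows_lin_indep_inj_on:
  assumes "finite F" "rows_lin_indep V M F"
  shows "inj_on M F"
proof (rule inj_onI, rule ccontr)
  fix D1 D2 assume D: "D1 \<in> F" "D2 \<in> F" "M D1 = M D2" "D1 \<noteq> D2"
  define c where "c r = (if r = D1 then 1 else if r = D2 then -1 else (0::real))" for r
  have "(\<Sum>r\<in>F. c r * M r x) = M D1 x - M D2 x" for x
  proof -
    have "(\<Sum>r\<in>F. c r * M r x)
        = (\<Sum>r\<in>F. (if r = D1 then M D1 x else 0) - (if r = D2 then M D2 x else 0))"
      by (rule sum.cong) (use D(4) in \<open>auto simp: c_def\<close>)
    also have "\<dots> = M D1 x - M D2 x" using assms(1) D by (simp add: sum_subtractf)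
    finally show ?thesis .
  qed
  then have "c D1 = 0" using assms(2) D(1,3) unfolding rows_lin_indep_def by simp
  then show False by (simp add: c_def)
qed

lemma rows_lin_indep_independent:
  assumes "finite F" "rows_lin_indep V M F"
  shows "fun_vs.independent (M ` F)"
proof
  have inj: "inj_on M F" by (rule rows_lin_indep_inj_on[OF assms(1,2)])
  assume "fun_vs.dependent (M ` F)"
  then obtain u w where uw: "w \<in> M ` F" "u w \<noteq> 0" "(\<Sum>w\<in>M ` F. scale_fun (u w) w) = 0"
    using fun_vs.dependent_finite[of "M ` F"] assms(1) by auto
  have "(\<Sum>r\<in>F. u (M r) * M r x) = (\<Sum>w\<in>M ` F. scale_fun (u w) w) x" for x
    by (simp add: sum.reindex[OF inj] sum_fun_apply scale_fun_def)
  then have "\<forall>x\<in>V. (\<Sum>r\<in>F. u (M r) * M r x) = 0" using uw(3) by simp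
  then have "\<forall>r\<in>F. u (M r) = 0"
    using assms(2)[unfolded rows_lin_indep_def, rule_format, of "\<lambda>r. u (M r)"] by blast
  then show False using uw(1,2) by auto
qed

lemma card_le_of_rows_lin_indep:
  assumes "finite V" "finite F" "rows_lin_indep V M F"
    and "\<And>r x. r \<in> F \<Longrightarrow> x \<notin> V \<Longrightarrow> M r x = 0"
  shows "card F \<le> card V"
proof -
  have "M ` F \<subseteq> fun_vs.span ((\<lambda>v. indicator {v}) ` V)"
  proof
    fix w assume "w \<in> M ` F"
    then obtain r where r: "r \<in> F" "w = M r" by blast
    show "w \<in> fun_vs.span ((\<lambda>v. indicator {v}) ` V)"
      unfolding r(2) by (rule span_indicators[OF assms(1)]) (rule assms(4)[OF r(1)])
  qed
  then have "card (M ` F) \<le> card ((\<lambda>v. indicat_real {v}) ` V)"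
    using fun_vs.independent_span_bound[OF finite_imageI[OF assms(1)]
          rows_lin_indep_independent[OF assms(2,3)]] by simp
  also have "\<dots> \<le> card V" by (rule card_image_le[OF assms(1)])
  finally show ?thesis using card_image[OF rows_lin_indep_inj_on[OF assms(2,3)]] by simp
qed

lemma indicator_singleton_eq_iff: "indicator {a} = indicat_real {b} \<longleftrightarrow> a = b"
proof
  assume "indicator {a} = indicat_real {b}"
  then have "indicator {a} a = (indicator {b} a :: real)" by simp
  then show "a = b" by (simp add: indicator_def split: if_splits)
qed simp

lemma independent_indicators: "fun_vs.independent ((\<lambda>v. indicat_real {v}) ` V)"
proof
  assume "fun_vs.dependent ((\<lambda>v. indicat_real {v}) ` V)"
  then obtain T u w where Tuw: "finite T" "T \<subseteq> (\<lambda>v. indicator {v}) ` V" "w \<in> T" "u w \<noteq> 0"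
      "(\<Sum>w\<in>T. scale_fun (u w) w) = (0 :: 'a \<Rightarrow> real)"
    unfolding fun_vs.dependent_explicit by blast
  obtain a where a: "w = indicator {a}" using Tuw(2,3) by auto
  have "u w' * w' a = (if w' = w then u w' else 0)" if "w' \<in> T" for w'
    using that Tuw(2) a by (auto simp: indicator_def)
  then have "(\<Sum>w'\<in>T. scale_fun (u w') w') a = (\<Sum>w'\<in>T. if w' = w then u w' else 0)"
    by (simp add: sum_fun_apply scale_fun_def cong: sum.cong)
  also have "\<dots> = u w" using Tuw(1,3) by simp
  finally show False using Tuw(4,5) by simp
qed

lemma rows_lin_indep_of_independent:
  assumes "finite F" "inj_on M F" "fun_vs.independent (M ` F)"
    and "\<And>r x. r \<in> F \<Longrightarrow> x \<notin> V \<Longrightarrow> M r x = 0"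
  shows "rows_lin_indep V M F"
  unfolding rows_lin_indep_def
proof (intro allI impI)
  fix c assume c: "\<forall>x\<in>V. (\<Sum>r\<in>F. c r * M r x) = 0"
  let ?u = "\<lambda>w. c (the_inv_into F M w)"
  have "(\<Sum>w\<in>M ` F. scale_fun (?u w) w) x = (\<Sum>r\<in>F. c r * M r x)" for x
    by (simp add: sum.reindex[OF assms(2)] sum_fun_apply scale_fun_def
        the_inv_into_f_f[OF assms(2)])
  also have "\<dots> x = 0" for x
  proof (cases "x \<in> V")
    case False
    then show ?thesis using assms(4) by simp
  qed (use c in blast)
  finally have "(\<Sum>w\<in>M ` F. scale_fun (?u w) w) = 0" by (simp add: fun_eq_iff)
  moreover have fin: "finite (M ` F)" using assms(1) by simp
  ultimately have "\<forall>w\<in>M ` F. ?u w = 0"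
    using assms(3) fun_vs.dependent_finite[OF fin] by auto
  then show "\<forall>r\<in>F. c r = 0" by (simp add: the_inv_into_f_f[OF assms(2)])
qed

lemma lin_indep_rows_of_span:
  assumes "finite V" "finite E" "\<And>r x. r \<in> E \<Longrightarrow> x \<notin> V \<Longrightarrow> M r x = 0"
    and "\<And>v. v \<in> V \<Longrightarrow> indicator {v} \<in> fun_vs.span (M ` E)"
  shows "\<exists>F. F \<subseteq> E \<and> rows_lin_indep V M F \<and> card V \<le> card F"
proof -
  obtain B where B: "B \<subseteq> M ` E" "fun_vs.independent B" "M ` E \<subseteq> fun_vs.span B"
    by (rule fun_vs.maximal_independent_subset)
  obtain F where F: "F \<subseteq> E" "inj_on M F" "B = M ` F" using B(1) subset_image_inj by metis
  have fin: "finite F" using F(1) assms(2) finite_subset by blast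
  have "(\<lambda>v. indicat_real {v}) ` V \<subseteq> fun_vs.span B"
    using assms(4) fun_vs.span_mono[OF B(3)] by (auto simp: fun_vs.span_span)
  then have "card ((\<lambda>v. indicat_real {v}) ` V) \<le> card B"
    using fun_vs.independent_span_bound[OF _ independent_indicators, of B V] fin F(3) by simp
  moreover have "card ((\<lambda>v. indicat_real {v}) ` V) = card V"
    by (rule card_image) (auto intro!: inj_onI simp: indicator_singleton_eq_iff)
  moreover have "rows_lin_indep V M F"
    using fin F B(2) assms(3) by (intro rows_lin_indep_of_independent) auto
  ultimately show ?thesis using F card_image[OF F(2)] by auto
qed

lemma row_matroid_rank_eq_card:
  assumes "finite V" "finite E" "\<And>r x. r \<in> E \<Longrightarrow> x \<notin> V \<Longrightarrow> M r x = 0"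
    and "\<And>v. v \<in> V \<Longrightarrow> indicator {v} \<in> fun_vs.span (M ` E)"
  shows "row_matroid_rank E V M = card V"
proof -
  let ?S = "{card F | F. F \<subseteq> E \<and> rows_lin_indep V M F}"
  have "?S \<subseteq> card ` Pow E" by auto
  then have fin: "finite ?S" using assms(2) finite_subset by blast
  have le: "n \<le> card V" if n: "n \<in> ?S" for n
  proof -
    obtain F where F: "n = card F" "F \<subseteq> E" "rows_lin_indep V M F" using n by blast
    have "card F \<le> card V"
      by (rule card_le_of_rows_lin_indep[OF assms(1) finite_subset[OF F(2) assms(2)] F(3)])
        (use F(2) assms(3) in blast)
    then show ?thesis using F(1) by simp
  qed
  obtain F where F: "F \<subseteq> E" "rows_lin_indep V M F" "card V \<le> card F"
    using lin_indep_rows_of_span[OF assms] by blast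
  have mem: "card F \<in> ?S" using F by blast
  have "Max ?S = card V"
  proof (rule antisym)
    show "Max ?S \<le> card V" using fin mem le by (subst Max_le_iff) auto
    show "card V \<le> Max ?S" using F(3) Max_ge[OF fin mem] by simp
  qed
  then show ?thesis unfolding row_matroid_rank_def .
qed

lemma det_scale_rows:
  assumes "A \<in> carrier_mat n n" "B \<in> carrier_mat n n"
    and "\<And>i j. i < n \<Longrightarrow> j < n \<Longrightarrow> A $$ (i, j) = r i * B $$ (i, j)"
  shows "det A = (\<Prod>i<n. r i) * det (B :: real mat)"
proof -
  have "det A = (\<Sum>\<pi>\<in>{\<pi>. \<pi> permutes {0..<n}}.
      of_int (sign \<pi>) * (\<Prod>i = 0..<n. r i * B $$ (i, \<pi> i)))"
    unfolding det_def'[OF assms(1)]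
    by (intro sum.cong refl arg_cong2[where f = "(*)"] prod.cong)
      (auto simp: assms(3) permutes_in_image)
  also have "\<dots> = (\<Prod>i<n. r i) * det B"
    unfolding det_def'[OF assms(2)]
    by (simp add: prod.distrib sum_distrib_left atLeast0LessThan mult_ac)
  finally show ?thesis .
qed

lemma sum_lessThan_eq_if_vanishing:
  fixes k d :: nat
  assumes "k \<le> d" "\<And>l. k \<le> l \<Longrightarrow> f l = 0"
  shows "(\<Sum>l<d. f l) = (\<Sum>l<k. f l)"
proof (rule sum.mono_neutral_right)
  show "\<forall>l\<in>{..<d} - {..<k}. f l = 0" using assms(2) by simp
qed (use assms(1) in auto)

section \<open>A witness simplex\<close>

text \<open>The vertices of the witness simplex are the standard basis vectors e_0, ..., e_(k-1)
  and the point -(e_0 + ... + e_(k-1)). Taking the origin as last vertex instead would not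
  do: the k faces through the origin would all project the origin to itself, giving equal
  rows.\<close>

definition simplex_point :: "nat \<Rightarrow> nat \<Rightarrow> nat \<Rightarrow> real" where
  "simplex_point k j l = (if j < k then (if l = j then 1 else 0) else (if l < k then -1 else 0))"

definition simplex_gram :: "nat \<Rightarrow> nat \<Rightarrow> nat \<Rightarrow> real" where
  "simplex_gram k j j' =
    (if j = k \<and> j' = k then real k else if j = k \<or> j' = k then -1 else if j = j' then 1 else 0)"

lemma gram_simplex_point:
  assumes "k \<le> d" "j \<le> k" "j' \<le> k"
  shows "(\<Sum>l<d. simplex_point k j l * simplex_point k j' l) = simplex_gram k j j'"
proof -
  let ?Y = "simplex_point k"
  have "(\<Sum>l<d. ?Y j l * ?Y j' l) = (\<Sum>l<k. ?Y j l * ?Y j' l)"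
    using assms(1) by (rule sum_lessThan_eq_if_vanishing) (simp add: simplex_point_def)
  also have "\<dots> = simplex_gram k j j'"
  proof -
    have delta: "(\<Sum>l<k. if l = i then c else 0) = c" if "i < k" for i and c :: real
      using that by simp
    consider "j = k" "j' = k" | "j = k" "j' < k" | "j < k" "j' = k" | "j < k" "j' < k"
      using assms(2,3) by linarith
    then show ?thesis
    proof cases
      case 1
      then show ?thesis by (simp add: simplex_point_def simplex_gram_def)
    next
      case 2
      then have "(\<Sum>l<k. ?Y j l * ?Y j' l) = (\<Sum>l<k. if l = j' then -1 else 0)"
        by (intro sum.cong) (auto simp: simplex_point_def)
      then show ?thesis using 2 delta by (simp add: simplex_gram_def)
    next
      case 3
      then have "(\<Sum>l<k. ?Y j l * ?Y j' l) = (\<Sum>l<k. if l = j then -1 else 0)"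
        by (intro sum.cong) (auto simp: simplex_point_def)
      then show ?thesis using 3 delta by (simp add: simplex_gram_def)
    next
      case 4
      then have "(\<Sum>l<k. ?Y j l * ?Y j' l) = (\<Sum>l<k. if l = j then (if j = j' then 1 else 0) else 0)"
        by (intro sum.cong) (auto simp: simplex_point_def)
      then show ?thesis using 4 delta by (simp add: simplex_gram_def)
    qed
  qed
  finally show ?thesis .
qed

lemma sum_simplex_point:
  assumes "m \<le> k" "l < k"
  shows "(\<Sum>j\<in>{..k} - {m}. b j * simplex_point k j l)
    = (if l \<noteq> m then b l else 0) - (if m \<noteq> k then b k else 0)"
proof -
  have "(\<Sum>j\<in>{..<k} - {m}. b j * simplex_point k j l)
      = (\<Sum>j\<in>{..<k} - {m}. if j = l then b j else 0)"
    using assms(2) by (intro sum.cong) (auto simp: simplex_point_def)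
  also have "\<dots> = (if l \<noteq> m then b l else 0)" using assms(2) by simp
  finally have below: "(\<Sum>j\<in>{..<k} - {m}. b j * simplex_point k j l) = (if l \<noteq> m then b l else 0)" .
  show ?thesis
  proof (cases "m = k")
    case True
    then have "{..k} - {m} = {..<k} - {m}" by auto
    then show ?thesis using below True by simp
  next
    case False
    then have "{..k} - {m} = insert k ({..<k} - {m})" using assms(1) by auto
    then show ?thesis using below False assms(2) by (simp add: simplex_point_def)
  qed
qed


lemma sum_atMost_minus:
  fixes m k :: nat
  assumes "m \<le> k"
  shows "(\<Sum>j\<in>{..k} - {m}. f j) = (if m = k then (\<Sum>j<k. f j) else f k + (\<Sum>j\<in>{..<k} - {m}. f j))"
proof (cases "m = k")
  case True
  then have "{..k} - {m} = {..<k}" by auto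
  then show ?thesis using True by simp
next
  case False
  then have "{..k} - {m} = insert k ({..<k} - {m})" using assms by auto
  then show ?thesis using False by simp
qed

lemma face_coeff_identities:
  fixes k :: nat
  assumes "k \<ge> 1"
  defines "D \<equiv> real k ^ 2 + real k - 1"
  shows "D > 0" and "real k / D + (real k - 1) * ((real k + 1) / D) = 1"
    and "(real k + 1) / D - real k / D = 1 / D"
    and "real k * (real k / D) - (real k - 1) * ((real k + 1) / D) = 1 / D"
proof -
  have k: "real k \<ge> 1" using assms(1) by simp
  then show D: "D > 0" unfolding D_def by (smt (verit) one_le_power)
  have "real k / D + (real k - 1) * ((real k + 1) / D) = (real k + (real k - 1) * (real k + 1)) / D"
    using D by (simp add: field_simps)
  also have "real k + (real k - 1) * (real k + 1) = D"
    by (simp add: D_def algebra_simps power2_eq_square)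
  finally show "real k / D + (real k - 1) * ((real k + 1) / D) = 1" using D by simp
  show "(real k + 1) / D - real k / D = 1 / D" by (simp add: diff_divide_distrib[symmetric])
  have "real k * (real k / D) - (real k - 1) * ((real k + 1) / D)
      = (real k * real k - (real k - 1) * (real k + 1)) / D"
    using D by (simp add: field_simps)
  then show "real k * (real k / D) - (real k - 1) * ((real k + 1) / D) = 1 / D"
    by (simp add: algebra_simps)
qed

locale simplex =
  fixes S :: "'a set" and k :: nat
  assumes finite_S: "finite S" and card_S: "card S = Suc k" and k_pos: "k \<ge> 1"
begin

abbreviation vertex :: "nat \<Rightarrow> 'a" where "vertex \<equiv> set_enum S"

definition face :: "nat \<Rightarrow> 'a set" where "face m = S - {vertex m}"

lemma vertex_in: "j \<le> k \<Longrightarrow> vertex j \<in> S"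
  using set_enum_in[OF finite_S] card_S by simp

lemma vertex_eq_iff: "i \<le> k \<Longrightarrow> j \<le> k \<Longrightarrow> vertex i = vertex j \<longleftrightarrow> i = j"
  using set_index_set_enum[OF finite_S] card_S by (metis le_imp_less_Suc)

lemma set_index_vertex: "j \<le> k \<Longrightarrow> set_index S (vertex j) = j"
  using set_index_set_enum[OF finite_S] card_S by simp

lemma S_eq: "S = vertex ` {..k}"
  using bij_betw_imp_surj_on[OF bij_betw_set_enum[OF finite_S]] card_S
  by (simp add: atLeast0LessThan lessThan_Suc_atMost)

lemma face_eq: "m \<le> k \<Longrightarrow> face m = vertex ` ({..k} - {m})"
  unfolding face_def by (subst S_eq) (auto simp: vertex_eq_iff)

lemma finite_face: "finite (face m)"
  unfolding face_def using finite_S by simp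

lemma face_subset: "face m \<subseteq> S"
  unfolding face_def by auto

lemma card_face: "m \<le> k \<Longrightarrow> card (face m) = k"
  unfolding face_def using vertex_in finite_S card_S by simp

lemma vertex_in_face_iff: "m \<le> k \<Longrightarrow> j \<le> k \<Longrightarrow> vertex j \<in> face m \<longleftrightarrow> j \<noteq> m"
  unfolding face_def using vertex_in vertex_eq_iff by blast

lemma sum_face:
  assumes "m \<le> k"
  shows "(\<Sum>x\<in>face m. g x) = (\<Sum>j\<in>{..k} - {m}. g (vertex j))"
proof -
  have "inj_on vertex ({..k} - {m})" by (auto intro!: inj_onI simp: vertex_eq_iff)
  then show ?thesis unfolding face_eq[OF assms] by (simp add: sum.reindex)
qed

definition simplex_config :: "'a \<Rightarrow> nat \<Rightarrow> real" where
  "simplex_config v = simplex_point k (set_index S v)"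

lemma simplex_config_vertex: "j \<le> k \<Longrightarrow> simplex_config (vertex j) = simplex_point k j"
  by (simp add: simplex_config_def set_index_vertex)

lemma simplex_config_aff_indep:
  assumes "k \<le> d" "m \<le> k" and \<beta>: "\<forall>l<d. (\<Sum>x\<in>face m. \<beta> x * simplex_config x l) = 0"
  shows "\<forall>x\<in>face m. \<beta> x = 0"
proof -
  have eq: "(if l \<noteq> m then \<beta> (vertex l) else 0) - (if m \<noteq> k then \<beta> (vertex k) else 0) = 0"
    if "l < k" for l
  proof -
    have "(\<Sum>x\<in>face m. \<beta> x * simplex_config x l)
        = (\<Sum>j\<in>{..k} - {m}. \<beta> (vertex j) * simplex_point k j l)"
      unfolding sum_face[OF assms(2)] by (rule sum.cong) (auto simp: simplex_config_vertex)
    then show ?thesis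
      using \<beta> assms(1) that sum_simplex_point[OF assms(2) that, of "\<lambda>j. \<beta> (vertex j)"] by simp
  qed
  have last: "\<beta> (vertex k) = 0" if "m \<noteq> k" using eq[of m] that assms(2) by simp
  have "\<beta> (vertex j) = 0" if "j \<le> k" "j \<noteq> m" for j
  proof (cases "j = k")
    case False
    then show ?thesis using eq[of j] that last by (cases "m = k") simp_all
  qed (use last that in simp)
  then show ?thesis using face_eq[OF assms(2)] by auto
qed

lemma det_bordered_gram_simplex_config:
  assumes "k \<le> d" "m \<le> k"
  shows "det (bordered_gram d simplex_config (face m)) \<noteq> 0"
proof (rule bordered_gram_det_nonzero[OF finite_face])
  show "face m \<noteq> {}" using card_face[OF assms(2)] k_pos by auto
qed (use simplex_config_aff_indep[OF assms] in blast)

text \<open>For m < k they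
  take one value on the k - 1 basis vectors of the face by symmetry; this value and the one
  at the last vertex are fixed by \<Sum>\<beta> = 1 and the equal inner products.\<close>

definition face_coeff :: "nat \<Rightarrow> nat \<Rightarrow> real" where
  "face_coeff m j = (if m = k then 1 / real k
     else if j = k then real k / (real k ^ 2 + real k - 1)
     else (real k + 1) / (real k ^ 2 + real k - 1))"

definition face_const :: "nat \<Rightarrow> real" where
  "face_const m = (if m = k then 1 / real k else 1 / (real k ^ 2 + real k - 1))"

lemma sum_face_coeff: "m \<le> k \<Longrightarrow> (\<Sum>j\<in>{..k} - {m}. face_coeff m j) = 1"
  using face_coeff_identities(2)[OF k_pos] k_pos
  by (auto simp: sum_atMost_minus face_coeff_def of_nat_diff)

lemma simplex_gram_face_coeff:
  assumes "m \<le> k" "j \<le> k" "j \<noteq> m"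
  shows "(\<Sum>j'\<in>{..k} - {m}. simplex_gram k j j' * face_coeff m j') = face_const m"
proof (cases "m = k")
  case True
  then have "(\<Sum>j'<k. simplex_gram k j j' * face_coeff m j')
      = (\<Sum>j'<k. if j' = j then 1 / real k else 0)"
    using assms by (intro sum.cong) (auto simp: simplex_gram_def face_coeff_def)
  then show ?thesis using True assms by (simp add: sum_atMost_minus face_const_def)
next
  case False
  show ?thesis
  proof (cases "j = k")
    case True
    then have "(\<Sum>j'\<in>{..<k} - {m}. simplex_gram k j j' * face_coeff m j')
        = (\<Sum>j'\<in>{..<k} - {m}. - ((real k + 1) / (real k ^ 2 + real k - 1)))"
      using False by (intro sum.cong) (auto simp: simplex_gram_def face_coeff_def minus_divide_left)
    then show ?thesis
      using False True assms face_coeff_identities(4)[OF k_pos] k_pos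
      by (simp add: sum_atMost_minus simplex_gram_def face_coeff_def face_const_def of_nat_diff)
  next
    case j: False
    have "(\<Sum>j'\<in>{..<k} - {m}. simplex_gram k j j' * face_coeff m j')
        = (\<Sum>j'\<in>{..<k} - {m}. if j' = j then (real k + 1) / (real k ^ 2 + real k - 1) else 0)"
      using False j by (intro sum.cong) (auto simp: simplex_gram_def face_coeff_def)
    then show ?thesis
      using False j assms face_coeff_identities(3)[OF k_pos]
      by (simp add: sum_atMost_minus simplex_gram_def face_coeff_def face_const_def)
  qed
qed

lemma simplex_config_proj_system:
  assumes "k \<le> d" "m \<le> k"
  shows "proj_system d simplex_config (face m) (\<lambda>x. face_coeff m (set_index S x)) (face_const m)"
  unfolding proj_system_def
proof
  show "(\<Sum>x\<in>face m. face_coeff m (set_index S x)) = 1"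
    using sum_face_coeff[OF assms(2)] by (simp add: sum_face[OF assms(2)] set_index_vertex)
  show "\<forall>x\<in>face m. (\<Sum>z\<in>face m. gram d simplex_config x z * face_coeff m (set_index S z))
      = face_const m"
  proof
    fix x assume "x \<in> face m"
    then obtain j where j: "j \<le> k" "j \<noteq> m" "x = vertex j" using face_eq[OF assms(2)] by auto
    have "(\<Sum>z\<in>face m. gram d simplex_config x z * face_coeff m (set_index S z))
        = (\<Sum>j'\<in>{..k} - {m}. simplex_gram k j j' * face_coeff m j')"
      unfolding sum_face[OF assms(2)] j(3) using assms j(1)
      by (intro sum.cong)
        (simp_all add: gram_def simplex_config_vertex gram_simplex_point set_index_vertex)
    then show "(\<Sum>z\<in>face m. gram d simplex_config x z * face_coeff m (set_index S z)) = face_const m"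
      using simplex_gram_face_coeff[OF assms(2) j(1,2)] by simp
  qed
qed

lemma face_coeff_kernel:
  assumes u: "\<And>m. m \<le> k \<Longrightarrow> (\<Sum>j\<in>{..k} - {m}. face_coeff m j * u j) = 0" and "j \<le> k"
  shows "u j = 0"
proof -
  define D where "D = real k ^ 2 + real k - 1"
  have D: "D > 0" unfolding D_def by (rule face_coeff_identities(1)[OF k_pos])
  have "(\<Sum>j<k. u j / real k) = 0" using u[of k] by (simp add: sum_atMost_minus face_coeff_def)
  then have U: "(\<Sum>j<k. u j) = 0" using k_pos by (simp add: sum_divide_distrib[symmetric])
  have row: "real k * u k = (real k + 1) * u m" if "m < k" for m
  proof -
    have inner: "(\<Sum>j\<in>{..<k} - {m}. face_coeff m j * u j)
        = (\<Sum>j\<in>{..<k} - {m}. (real k + 1) / D * u j)"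
      using that by (intro sum.cong) (auto simp: face_coeff_def D_def)
    have "0 = face_coeff m k * u k + (\<Sum>j\<in>{..<k} - {m}. face_coeff m j * u j)"
      using u[of m] that sum_atMost_minus[of m k "\<lambda>j. face_coeff m j * u j"] by simp
    also have "\<dots> = real k / D * u k + (\<Sum>j\<in>{..<k} - {m}. (real k + 1) / D * u j)"
      using that unfolding inner by (simp add: face_coeff_def D_def)
    also have "(\<Sum>j\<in>{..<k} - {m}. (real k + 1) / D * u j) = (real k + 1) / D * ((\<Sum>j<k. u j) - u m)"
      using that by (simp add: sum_distrib_left[symmetric] sum_diff1 del: times_divide_eq_left)
    finally have "real k / D * u k = (real k + 1) / D * u m" using U by simp
    then show ?thesis using D by (simp add: field_simps)
  qed
  have "(real k + 1) * (\<Sum>m<k. u m) = (\<Sum>m<k. real k * u k)"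
    unfolding sum_distrib_left by (rule sum.cong) (simp_all add: row)
  then have "real k * (real k * u k) = 0" using U by simp
  then have uk: "u k = 0" using U k_pos by simp
  show ?thesis
  proof (cases "j = k")
    case False
    then show ?thesis using row[of j] uk assms(2) by simp
  qed (use uk in simp)
qed

definition face_matrix :: "(nat \<Rightarrow> 'a \<Rightarrow> real) \<Rightarrow> real mat" where
  "face_matrix \<beta> = mat (Suc k) (Suc k) (\<lambda>(m, j). if j = m then 0 else \<beta> m (vertex j))"

lemma face_matrix_carrier: "face_matrix \<beta> \<in> carrier_mat (Suc k) (Suc k)"
  by (simp add: face_matrix_def)

lemma face_matrix_mult_vec:
  assumes "u \<in> carrier_vec (Suc k)" "m \<le> k"
  shows "(face_matrix \<beta> *\<^sub>v u) $ m = (\<Sum>j\<in>{..k} - {m}. \<beta> m (vertex j) * u $ j)"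
proof -
  have "(face_matrix \<beta> *\<^sub>v u) $ m = (\<Sum>j\<le>k. (if j = m then 0 else \<beta> m (vertex j)) * u $ j)"
    using assms by (subst index_mult_mat_vec)
      (auto simp: face_matrix_def scalar_prod_def atLeast0LessThan lessThan_Suc_atMost
        intro!: sum.cong)
  also have "\<dots> = (\<Sum>j\<in>{..k} - {m}. (if j = m then 0 else \<beta> m (vertex j)) * u $ j)"
    using assms(2) by (simp add: sum.remove[of "{..k}" m])
  also have "\<dots> = (\<Sum>j\<in>{..k} - {m}. \<beta> m (vertex j) * u $ j)"
    by (rule sum.cong) auto
  finally show ?thesis .
qed

lemma det_face_matrix_witness:
  assumes "k \<le> d"
  shows "det (face_matrix (\<lambda>m x. face_coeff m (set_index S x))) \<noteq> 0"
proof
  assume "det (face_matrix (\<lambda>m x. face_coeff m (set_index S x))) = 0"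
  then obtain u where u: "u \<in> carrier_vec (Suc k)" "u \<noteq> 0\<^sub>v (Suc k)"
    "face_matrix (\<lambda>m x. face_coeff m (set_index S x)) *\<^sub>v u = 0\<^sub>v (Suc k)"
    using det_0_iff_vec_prod_zero[OF face_matrix_carrier] by blast
  have "(\<Sum>j\<in>{..k} - {m}. face_coeff m j * u $ j) = 0" if m: "m \<le> k" for m
  proof -
    have "(\<Sum>j\<in>{..k} - {m}. face_coeff m j * u $ j)
        = (\<Sum>j\<in>{..k} - {m}. face_coeff m (set_index S (vertex j)) * u $ j)"
      by (rule sum.cong) (simp_all add: set_index_vertex)
    also have "\<dots> = (face_matrix (\<lambda>m x. face_coeff m (set_index S x)) *\<^sub>v u) $ m"
      by (rule face_matrix_mult_vec[OF u(1) m, symmetric])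
    finally show ?thesis using u(3) m by simp
  qed
  then have "u $ j = 0" if "j \<le> k" for j
    using face_coeff_kernel that by blast
  then have "u = 0\<^sub>v (Suc k)" using u(1) by (intro eq_vecI) auto
  with u(2) show False ..
qed

definition cramer_matrix :: "nat \<Rightarrow> ('a \<Rightarrow> nat \<Rightarrow> real) \<Rightarrow> real mat" where
  "cramer_matrix d q = mat (Suc k) (Suc k) (\<lambda>(m, j). if j = m then 0 else
     det (replace_col (bordered_gram d q (face m)) (unit_vec (Suc k) k)
       (set_index (face m) (vertex j))))"

lemma det_cramer_matrix:
  assumes sys: "\<And>m. m \<le> k \<Longrightarrow> proj_system d q (face m) (\<beta> m) (c m)"
  shows "det (cramer_matrix d q)
    = (\<Prod>m<Suc k. det (bordered_gram d q (face m))) * det (face_matrix \<beta>)"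
proof (rule det_scale_rows)
  fix m j assume "m < Suc k" "j < Suc k"
  then have mj: "m \<le> k" "j \<le> k" by simp_all
  show "cramer_matrix d q $$ (m, j) = det (bordered_gram d q (face m)) * face_matrix \<beta> $$ (m, j)"
  proof (cases "j = m")
    case False
    then have "vertex j \<in> face m" using vertex_in_face_iff[OF mj] by simp
    from proj_system_cramer[OF finite_face sys[OF mj(1)] this]
    show ?thesis using card_face[OF mj(1)] mj False
      by (simp add: cramer_matrix_def face_matrix_def mult.commute)
  qed (use mj in \<open>simp add: cramer_matrix_def face_matrix_def\<close>)
qed (simp_all add: cramer_matrix_def face_matrix_carrier)

lemma coord_poly_det_cramer_matrix:
  assumes "S \<subseteq> V"
  shows "coord_poly V d (\<lambda>q. det (cramer_matrix d q))"
proof (rule coord_poly_det)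
  show "cramer_matrix d q \<in> carrier_mat (Suc k) (Suc k)" for q by (simp add: cramer_matrix_def)
  fix m j assume "m < Suc k" "j < Suc k"
  then have mj: "m \<le> k" "j \<le> k" by simp_all
  have "coord_poly V d (\<lambda>q. det (replace_col (bordered_gram d q (face m))
      (unit_vec (card (face m) + 1) (card (face m))) (set_index (face m) (vertex j))))"
    using face_subset assms by (intro coord_poly_det_cramer_numerator[OF finite_face]) blast
  then show "coord_poly V d (\<lambda>q. cramer_matrix d q $$ (m, j))"
    using mj card_face[OF mj(1)]
    by (cases "j = m") (simp_all add: cramer_matrix_def coord_poly_Ints)
qed

lemma det_face_matrix_generic:
  assumes p: "generic_config d V p" and "S \<subseteq> V" "k \<le> d"
  shows "det (face_matrix (\<lambda>m. proj_coeffs d p (face m))) \<noteq> 0"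
proof -
  have face_V: "face m \<subseteq> V" for m using face_subset assms(2) by blast
  have nonempty: "face m \<noteq> {}" if "m \<le> k" for m using card_face[OF that] k_pos by auto
  have "(\<Prod>m<Suc k. det (bordered_gram d simplex_config (face m))) \<noteq> 0"
    using det_bordered_gram_simplex_config[OF assms(3)] by (simp add: prod_zero_iff)
  then have "det (cramer_matrix d simplex_config) \<noteq> 0"
    using det_cramer_matrix[OF simplex_config_proj_system[OF assms(3)]]
      det_face_matrix_witness[OF assms(3)] by simp
  then have cramer_p: "det (cramer_matrix d p) \<noteq> 0"
    by (rule generic_coord_poly_nonzero[OF p coord_poly_det_cramer_matrix[OF assms(2)]])
  have det_p: "det (bordered_gram d p (face m)) \<noteq> 0" if "m \<le> k" for m
    using generic_det_bordered_gram_nonzero[OF p finite_face face_V nonempty[OF that]]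
      card_face[OF that] assms(3) by simp
  have "\<forall>m\<in>{..k}. \<exists>c. proj_system d p (face m) (proj_coeffs d p (face m)) c"
    using proj_coeffs_proj_system[OF finite_face det_p] by blast
  then obtain c where "\<And>m. m \<le> k \<Longrightarrow> proj_system d p (face m) (proj_coeffs d p (face m)) (c m)"
    using bchoice[of "{..k}"] by (metis atMost_iff)
  from det_cramer_matrix[OF this] show ?thesis using cramer_p by simp
qed

lemma A_matrix_face_vertex:
  assumes "m \<le> k" "j \<le> k"
  shows "A_matrix d q (face m) (vertex j) = face_matrix (\<lambda>m. proj_coeffs d q (face m)) $$ (m, j)"
  using assms vertex_in_face_iff[OF assms] by (simp add: A_matrix_def face_matrix_def)

lemma indicator_vertex_eq_sum_rows:
  assumes "N * face_matrix (\<lambda>m. proj_coeffs d q (face m)) = 1\<^sub>m (Suc k)"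
    and "N \<in> carrier_mat (Suc k) (Suc k)" "i \<le> k"
  shows "indicat_real {vertex i} = (\<Sum>m\<le>k. scale_fun (N $$ (i, m)) (A_matrix d q (face m)))"
proof
  let ?M = "face_matrix (\<lambda>m. proj_coeffs d q (face m))"
  fix x
  show "indicat_real {vertex i} x = (\<Sum>m\<le>k. scale_fun (N $$ (i, m)) (A_matrix d q (face m))) x"
  proof (cases "x \<in> S")
    case True
    then obtain j where j: "j \<le> k" "x = vertex j" using S_eq by auto
    have "(\<Sum>m\<le>k. scale_fun (N $$ (i, m)) (A_matrix d q (face m))) x
        = (\<Sum>m\<le>k. N $$ (i, m) * ?M $$ (m, j))"
      by (simp add: sum_fun_apply scale_fun_def j(2) A_matrix_face_vertex[OF _ j(1)])
    also have "\<dots> = (N * ?M) $$ (i, j)"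
      using assms(2,3) j(1)
      by (simp add: face_matrix_def scalar_prod_def atLeast0LessThan lessThan_Suc_atMost)
    also have "\<dots> = indicat_real {vertex i} x"
      using assms(1,3) j vertex_eq_iff by (simp add: indicator_def)
    finally show ?thesis ..
  next
    case False
    then have "x \<notin> face m" for m using face_subset by blast
    then show ?thesis using False vertex_in[OF assms(3)]
      by (auto simp: sum_fun_apply scale_fun_def A_matrix_def indicator_def)
  qed
qed

lemma indicator_vertex_in_span:
  assumes "generic_config d V p" "S \<subseteq> V" "k \<le> d" "i \<le> k"
  shows "indicat_real {vertex i} \<in> fun_vs.span ((\<lambda>m. A_matrix d p (face m)) ` {..k})"
proof -
  obtain N where N: "N \<in> carrier_mat (Suc k) (Suc k)"
    "N * face_matrix (\<lambda>m. proj_coeffs d p (face m)) = 1\<^sub>m (Suc k)"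
    using det_non_zero_imp_unit[OF face_matrix_carrier det_face_matrix_generic[OF assms(1-3)],
        of undefined]
    unfolding Units_def by (auto simp: ring_mat_simps)
  have "(\<Sum>m\<le>k. scale_fun (N $$ (i, m)) (A_matrix d p (face m)))
      \<in> fun_vs.span ((\<lambda>m. A_matrix d p (face m)) ` {..k})"
    by (rule fun_vs.span_sum, rule fun_vs.span_scale, rule fun_vs.span_base) simp
  then show ?thesis using indicator_vertex_eq_sum_rows[OF N(2,1) assms(4)] by simp
qed

end

section \<open>Propagation along strongly connected components\<close>

lemma strongly_conn_rel_sym: "strongly_conn_rel k E D D' \<Longrightarrow> strongly_conn_rel k E D' D"
  unfolding strongly_conn_rel_def
proof (induction rule: rtranclp_induct)
  case (step D' D'')
  then have "hyp_adj k E D'' D'" by (simp add: hyp_adj_def Int_commute)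
  then show ?case using step.IH by (rule converse_rtranclp_into_rtranclp)
qed simp

lemma hyp_adj_obtain_new_vertex:
  assumes "k_uniform k V E" "hyp_adj k E D D'" "k \<ge> 1"
  obtains y where "y \<in> D'" "D' - {y} \<subseteq> D"
proof -
  have D': "D' \<in> E" "card (D' \<inter> D) = k - 1" using assms(2) by (auto simp: hyp_adj_def Int_commute)
  then have "finite D'" "card D' = k"
    using assms(1) by (auto simp: k_uniform_def intro: finite_subset)
  then have "card (D' - D) = 1" using D' assms(3) by (simp add: card_Diff_subset_Int)
  then obtain y where "D' - D = {y}" by (rule card_1_singletonE)
  then show ?thesis using that by blast
qed

lemma k_uniform_pos:
  assumes "k_uniform k V E" "V = \<Union>E" "v \<in> V"
  shows "k \<ge> 1"
proof -
  obtain D where D: "D \<in> E" "v \<in> D" using assms(2,3) by blast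
  then have "finite D" "card D = k" using assms(1) by (auto simp: k_uniform_def intro: finite_subset)
  then show ?thesis using D(2) card_0_eq by fastforce
qed

lemma indicators_in_row_span_propagate:
  assumes E: "k_uniform k V E" and p: "generic_config d V p" and "k \<le> d" "k \<ge> 1"
    and "strongly_conn_rel k E D D'"
    and "\<forall>v\<in>D. indicat_real {v} \<in> fun_vs.span (A_matrix d p ` E)"
  shows "\<forall>v\<in>D'. indicat_real {v} \<in> fun_vs.span (A_matrix d p ` E)"
  using assms(5) unfolding strongly_conn_rel_def
proof (induction rule: rtranclp_induct)
  case base
  show ?case by (rule assms(6))
next
  case (step D' D'')
  obtain y where y: "y \<in> D''" "D'' - {y} \<subseteq> D'"
    using hyp_adj_obtain_new_vertex[OF E step.hyps(2) assms(4)] .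
  have D'': "D'' \<in> E" using step.hyps(2) by (simp add: hyp_adj_def)
  then have D''_props: "finite D''" "D'' \<subseteq> V" "card D'' = k"
    using E by (auto simp: k_uniform_def intro: finite_subset)
  have "indicat_real {y} \<in> fun_vs.span (A_matrix d p ` E)"
  proof (rule indicator_in_span_by_support[OF D''_props(1) _ _ _ y(1)])
    show "A_matrix d p D'' x = 0" if "x \<notin> D''" for x using that by (simp add: A_matrix_def)
    show "A_matrix d p D'' \<in> A_matrix d p ` E" using D'' by blast
    show "A_matrix d p D'' y \<noteq> 0"
      using generic_proj_coeffs_nonzero[OF p D''_props(1,2) _ y(1)] D''_props(3) assms(3) y(1)
      by (simp add: A_matrix_def)
    show "indicat_real {v} \<in> fun_vs.span (A_matrix d p ` E)" if "v \<in> D'' - {y}" for v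
      using that y(2) step.IH by blast
  qed
  then show ?case using step.IH y(2) by blast
qed

lemma indicators_in_row_span:
  assumes E: "k_uniform k V E" "V = \<Union>E" "\<forall>C\<in>strong_components k E. contains_simplex k V C"
    and p: "generic_config d V p" and "k \<le> d" and D: "D \<in> E"
  shows "\<forall>v\<in>D. indicat_real {v} \<in> fun_vs.span (A_matrix d p ` E)"
proof -
  let ?C = "{D'. D' \<in> E \<and> strongly_conn_rel k E D D'}"
  have "?C \<in> strong_components k E" unfolding strong_components_def using D by blast
  then obtain S where S: "S \<subseteq> V" "finite S" "card S = Suc k"
    and faces: "\<And>T. T \<subseteq> S \<Longrightarrow> card T = k \<Longrightarrow> T \<in> ?C"
    using E(3) unfolding contains_simplex_def by auto
  obtain v where "v \<in> S" using S(3) by fastforce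
  then have "k \<ge> 1" using k_uniform_pos[OF E(1,2)] S(1) by blast
  interpret simplex S k using S \<open>k \<ge> 1\<close> by unfold_locales
  have face_C: "face m \<in> ?C" if "m \<le> k" for m using faces[OF face_subset card_face[OF that]] .
  have "(\<lambda>m. A_matrix d p (face m)) ` {..k} \<subseteq> A_matrix d p ` E" using face_C by blast
  then have span_faces: "fun_vs.span ((\<lambda>m. A_matrix d p (face m)) ` {..k})
      \<subseteq> fun_vs.span (A_matrix d p ` E)"
    by (rule fun_vs.span_mono)
  have face_0: "\<forall>v\<in>face 0. indicat_real {v} \<in> fun_vs.span (A_matrix d p ` E)"
  proof
    fix v assume "v \<in> face 0"
    then have "v \<in> vertex ` {..k}" using face_subset S_eq by blast
    then obtain i where i: "i \<le> k" "v = vertex i" by auto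
    have "indicat_real {vertex i} \<in> fun_vs.span ((\<lambda>m. A_matrix d p (face m)) ` {..k})"
      by (rule indicator_vertex_in_span[OF p S(1) assms(5) i(1)])
    then show "indicat_real {v} \<in> fun_vs.span (A_matrix d p ` E)" using span_faces i(2) by blast
  qed
  have "strongly_conn_rel k E (face 0) D"
    using face_C[of 0] by (simp add: strongly_conn_rel_sym)
  from indicators_in_row_span_propagate[OF E(1) p assms(5) \<open>k \<ge> 1\<close> this face_0]
  show ?thesis .
qed

theorem lemma3p4:
  fixes k d :: nat and V :: "'a set" and E :: "'a set set"
  assumes "k_uniform k V E"
    and "V = \<Union>E"
    and "\<forall>C\<in>strong_components k E. contains_simplex k V C"
    and "d \<ge> k"
    and "generic_config d V p"
  shows "row_matroid_rank E V (A_matrix d p) = card V"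
proof (rule row_matroid_rank_eq_card)
  show "finite V" using assms(1) by (simp add: k_uniform_def)
  then show "finite E" using assms(2) by (simp add: finite_UnionD)
  show "A_matrix d p D x = 0" if "D \<in> E" "x \<notin> V" for D x
    using that assms(2) by (auto simp: A_matrix_def)
  show "indicat_real {v} \<in> fun_vs.span (A_matrix d p ` E)" if "v \<in> V" for v
    using that assms(2) indicators_in_row_span[OF assms(1-3,5,4)] by blast
qed

end
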